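(* Let $X=(X_0,X_1,\dots)$ be a Markov chain on $[0,\infty)$ with transition kernel $T(\cdot\mid x)$ such that $\int_0^\infty|y-x|^3T(dy\mid x)<\infty$ for all $x\ge0$; let $\mu_k(x)=\int_0^\infty(y-x)^kT(dy\mid x)$, $k=1,2,3$, and assume $\mu_2(x)>0$ for all sufficiently large $x$. Assume: (i) there is a function $\psi_1$ with $\mu_1(x)\le\frac{\mu_2(x)}{2x}[1+\psi_1(x)]$ for all sufficiently large $x$ and $\lim_{x\to\infty}(\log x)\psi_1(x)=0$; (ii) $\lim_{x\to\infty}\frac{\log x}{x}\frac{\mu_3(x)}{\mu_2(x)}=0$; (iii) for each positive integer $m$ there is $\delta=\delta(m)<1$ with $\sup_{x_0\in[0,m]}T([0,m]\mid x_0)\le\delta$. Then there exists $m\in(0,\infty)$ such that the set $C=[0,m)$ is recurrent.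
   Context: For a Borel set $C\subseteq[0,\infty)$, let $\tau_C$ be the smallest $n\ge1$ with $X_n\in C$ ($\infty$ if none). $C$ is recurrent if $P(\tau_C<\infty\mid X_0=x_0)=1$ for every $x_0\in[0,\infty)$. *)

theory Defs
  imports "HOL-Probability.Probability"
begin

abbreviation state_space :: "real measure" where
  "state_space \<equiv> restrict_space borel {0..}"

definition transition_kernel :: "(real \<Rightarrow> real measure) \<Rightarrow> bool" where
  "transition_kernel T \<longleftrightarrow> T \<in> state_space \<rightarrow>\<^sub>M prob_algebra state_space"

definition nat_filtration :: "'a measure \<Rightarrow> (nat \<Rightarrow> 'a \<Rightarrow> real) \<Rightarrow> nat \<Rightarrow> 'a set set" where
  "nat_filtration M X n =
     sigma_sets (space M) {X i -` D \<inter> space M | i D. i \<le> n \<and> D \<in> sets state_space}"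

definition markov_chain :: "'a measure \<Rightarrow> (nat \<Rightarrow> 'a \<Rightarrow> real) \<Rightarrow> (real \<Rightarrow> real measure) \<Rightarrow> bool" where
  "markov_chain M X T \<longleftrightarrow>
     prob_space M \<and>
     (\<forall>n. X n \<in> M \<rightarrow>\<^sub>M state_space) \<and>
     (\<forall>n A B. A \<in> nat_filtration M X n \<longrightarrow> B \<in> sets state_space \<longrightarrow>
        measure M (A \<inter> (X (Suc n) -` B \<inter> space M)) =
        (\<integral>\<omega>. indicator A \<omega> * measure (T (X n \<omega>)) B \<partial>M))"

definition recurrent_set :: "(real \<Rightarrow> real measure) \<Rightarrow> real set \<Rightarrow> bool" where
  "recurrent_set T C \<longleftrightarrow>
     (\<forall>x0 \<ge> 0. \<forall>(M :: (nat \<Rightarrow> real) measure) X.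
        markov_chain M X T \<longrightarrow> (AE \<omega> in M. X 0 \<omega> = x0) \<longrightarrow>
        measure M {\<omega> \<in> space M. \<exists>n\<ge>1. X n \<omega> \<in> C} = 1)"

definition moment :: "(real \<Rightarrow> real measure) \<Rightarrow> nat \<Rightarrow> real \<Rightarrow> real" where
  "moment T k x = (\<integral>y. (y - x) ^ k \<partial>T x)"

end

theory Submission
  imports Defs
begin

text \<open>
  The potential is \<open>V x = ln (ln x)\<close>, frozen below \<open>e\<close>. Its fourth derivative is negative,
  so \<open>V\<close> lies below its cubic Taylor polynomial at \<open>x\<close>. Integrated against \<open>T(\<cdot> | x)\<close>, the
  first-order term is at most \<open>\<mu>\<^sub>2 (1 + \<psi>) / (2 x\<^sup>2 ln x)\<close> by (i), the second-order term
  \<open>-(ln x + 1) \<mu>\<^sub>2 / (2 x\<^sup>2 ln\<^sup>2 x)\<close> beats it by \<open>\<mu>\<^sub>2 (1 - \<psi> ln x) / (2 x\<^sup>2 ln\<^sup>2 x)\<close>, and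
  by (ii) the third-order term is smaller than this margin; hence \<open>\<integral> V dT(\<cdot> | x) \<le> V x\<close>
  for \<open>x \<ge> m\<close>. So for every \<open>K\<close> the expected potential of the chain killed on leaving
  \<open>[m, K]\<close> never increases, whence \<open>V K \<cdot> P(leave [m, K] upwards) \<le> E V(X\<^sub>1) < \<infinity>\<close>.
  By (iii) the chain cannot stay in \<open>[m, K]\<close> forever, so the probability of never
  entering \<open>[0, m)\<close> is at most \<open>E V(X\<^sub>1) / V K\<close>, which tends to \<open>0\<close> as \<open>K \<rightarrow> \<infinity>\<close>.
\<close>

section \<open>The potential \<open>ln (ln x)\<close>\<close>

text \<open>The catch-all last equation is the fourth derivative.\<close>

fun lnln_deriv :: "nat \<Rightarrow> real \<Rightarrow> real" where
  "lnln_deriv 0 x = ln (ln x)"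
| "lnln_deriv (Suc 0) x = 1 / (x * ln x)"
| "lnln_deriv (Suc (Suc 0)) x = - (ln x + 1) / (x^2 * (ln x)^2)"
| "lnln_deriv (Suc (Suc (Suc 0))) x = (2 * (ln x)^2 + 3 * ln x + 2) / (x^3 * (ln x)^3)"
| "lnln_deriv _ x = - (6 * (ln x)^3 + 11 * (ln x)^2 + 12 * ln x + 6) / (x^4 * (ln x)^4)"

lemma DERIV_lnln_deriv:
  assumes "k < 4" and "1 < x"
  shows "DERIV (lnln_deriv k) x :> lnln_deriv (Suc k) x"
proof -
  from \<open>k < 4\<close> consider "k = 0" | "k = 1" | "k = 2" | "k = 3" by linarith
  then show ?thesis
  proof cases
    case 1
    show ?thesis unfolding 1 lnln_deriv.simps[abs_def] using \<open>1 < x\<close>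
      by (auto intro!: derivative_eq_intros)
  next
    case 2
    show ?thesis
      unfolding 2 One_nat_def numeral_2_eq_2 lnln_deriv.simps[abs_def] using \<open>1 < x\<close>
      by (auto intro!: derivative_eq_intros simp: field_simps power2_eq_square)
  next
    case 3
    show ?thesis unfolding 3 numeral_2_eq_2 numeral_3_eq_3 lnln_deriv.simps[abs_def] using \<open>1 < x\<close>
      by (auto intro!: derivative_eq_intros simp: field_simps power2_eq_square power3_eq_cube)
  next
    case 4
    show ?thesis unfolding 4 numeral_2_eq_2 numeral_3_eq_3 lnln_deriv.simps[abs_def] using \<open>1 < x\<close>
      by (auto intro!: derivative_eq_intros simp: field_simps eval_nat_numeral)
  qed
qed

lemma lnln_deriv_4_neg:
  assumes "1 < x"
  shows "lnln_deriv 4 x < 0"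
proof -
  have "0 < ln x" using assms by simp
  then have "0 < 6 * (ln x)^3 + 11 * (ln x)^2 + 12 * ln x + 6"
    by (intro add_pos_pos) auto
  then show ?thesis using assms \<open>0 < ln x\<close> by (simp add: eval_nat_numeral divide_neg_pos)
qed

lemma lnln_le_taylor3:
  assumes "1 < x" and "1 < y"
  shows "ln (ln y) \<le> (\<Sum>k<4. lnln_deriv k x / fact k * (y - x) ^ k)"
proof (cases "y = x")
  case False
  obtain t where t: "min x y < t" "t < max x y"
    and taylor: "ln (ln y) = (\<Sum>k<4. lnln_deriv k x / fact k * (y - x) ^ k)
                              + lnln_deriv 4 t / fact 4 * (y - x) ^ 4"
    using Taylor[of 4 lnln_deriv "\<lambda>x. ln (ln x)" "min x y" "max x y" x y]
      DERIV_lnln_deriv assms False by (fastforce split: if_splits)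
  have "1 < t" using t assms by (auto simp: min_less_iff_disj)
  then have "lnln_deriv 4 t / fact 4 * (y - x) ^ 4 \<le> 0"
    using lnln_deriv_4_neg[of t] by (intro mult_nonpos_nonneg divide_nonpos_pos) auto
  with taylor show ?thesis by linarith
qed simp

definition lnln_potential :: "real \<Rightarrow> real" where
  "lnln_potential y = ln (ln (max y (exp 1)))"

lemma one_le_ln_max_exp1: "1 \<le> ln (max (y::real) (exp 1))"
  using ln_ge_iff[of "max y (exp 1)" 1] by (simp add: less_max_iff_disj)

lemma lnln_potential_nonneg: "0 \<le> lnln_potential y"
  unfolding lnln_potential_def using one_le_ln_max_exp1[of y] by simp

lemma mono_lnln_potential: "mono lnln_potential"
proof (rule monoI)
  fix y z :: real assume "y \<le> z"
  then have "ln (max y (exp 1)) \<le> ln (max z (exp 1))"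
    by (subst ln_le_cancel_iff) (auto simp: less_max_iff_disj)
  then show "lnln_potential y \<le> lnln_potential z"
    unfolding lnln_potential_def using one_le_ln_max_exp1[of y] one_le_ln_max_exp1[of z] by simp
qed

lemma lnln_potential_le: "lnln_potential y \<le> \<bar>y\<bar> + exp 1"
proof -
  have "lnln_potential y \<le> ln (max y (exp 1))"
    unfolding lnln_potential_def using ln_le_minus_one[of "ln (max y (exp 1))"] one_le_ln_max_exp1[of y]
    by simp
  also have "\<dots> \<le> max y (exp 1)" by (rule ln_bound) (simp add: less_max_iff_disj)
  also have "\<dots> \<le> \<bar>y\<bar> + exp 1" using exp_gt_zero[of 1] by linarith
  finally show ?thesis .
qed

lemma lnln_potential_at_top: "filterlim lnln_potential at_top at_top"
proof -
  have eq: "\<forall>\<^sub>F y in at_top. ln (ln y) = lnln_potential y"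
    using eventually_ge_at_top[of "exp 1"] by eventually_elim (simp add: lnln_potential_def)
  show ?thesis
    using filterlim_cong[OF refl refl eq] filterlim_compose[OF ln_at_top ln_at_top] by simp
qed

text \<open>The right-hand side is the cubic Taylor polynomial of \<open>ln (ln)\<close> at \<open>x\<close>, evaluated at
  \<open>(1 + s) x\<close>, where \<open>L = ln x\<close>.\<close>

lemma lnln_taylor3_nonneg_left:
  fixes L s :: real
  assumes L: "4 \<le> L" and s: "-1 \<le> s" "s \<le> 0"
  shows "0 \<le> ln L + s / L - (L + 1) / (2 * L^2) * s^2 + (2 * L^2 + 3 * L + 2) / (6 * L^3) * s^3"
proof -
  have "-1 / L \<le> s / L" using L s divide_right_mono[of "-1" s L] by simp
  moreover have "(L + 1) / (2 * L^2) * s^2 \<le> 1 / L"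
  proof -
    have "(-s)^2 \<le> 1" using s by (intro power_le_one) auto
    then have "s^2 \<le> 1" by simp
    then have "(L + 1) / (2 * L^2) * s^2 \<le> (L + 1) / (2 * L^2)"
      using L by (intro mult_left_le) auto
    also have "\<dots> \<le> 1 / L" using L by (simp add: field_simps power2_eq_square)
    finally show ?thesis .
  qed
  moreover have "-1 / L \<le> (2 * L^2 + 3 * L + 2) / (6 * L^3) * s^3"
  proof -
    have "(-s)^3 \<le> 1" using s by (intro power_le_one) auto
    then have "-1 \<le> s^3" by simp
    then have "- ((2 * L^2 + 3 * L + 2) / (6 * L^3)) \<le> (2 * L^2 + 3 * L + 2) / (6 * L^3) * s^3"
      using mult_left_mono[of "-1" "s^3" "(2 * L^2 + 3 * L + 2) / (6 * L^3)"] L by simp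
    moreover have "(2 * L^2 + 3 * L + 2) / (6 * L^3) \<le> 1 / L"
    proof -
      have "4 * L \<le> L * L" using L by (intro mult_right_mono) auto
      then have "2 * L^2 + 3 * L + 2 \<le> 6 * L^2" using L unfolding power2_eq_square by linarith
      then have "(2 * L^2 + 3 * L + 2) / (6 * L^3) \<le> 6 * L^2 / (6 * L^3)"
        using L by (intro divide_right_mono) auto
      also have "6 * L^2 / (6 * L^3) = 1 / L" using L by (simp add: power2_eq_square power3_eq_cube)
      finally show ?thesis .
    qed
    ultimately show ?thesis by simp
  qed
  moreover have "3 * (1 / L) \<le> ln L"
  proof -
    have "3 * (1 / L) \<le> 1" using L by simp
    also have "1 \<le> ln (4::real)" using exp_le by (subst ln_ge_iff) auto
    also have "\<dots> \<le> ln L" using L by simp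
    finally show ?thesis .
  qed
  ultimately show ?thesis by linarith
qed

lemma lnln_potential_le_taylor3:
  assumes x: "exp 4 \<le> x" and y: "0 \<le> y"
  shows "lnln_potential y \<le> (\<Sum>k<4. lnln_deriv k x / fact k * (y - x) ^ k)"
proof (cases "exp 1 \<le> y")
  case True
  have "exp 1 \<le> (exp 4 :: real)" by simp
  then have "exp 1 \<le> x" using x by linarith
  then have "1 < x" "1 < y" using True exp_gt_one[of 1] by linarith+
  then show ?thesis using True lnln_le_taylor3 by (simp add: lnln_potential_def)
next
  case False
  define L where "L = ln x"
  define s where "s = (y - x) / x"
  have x0: "0 < x" using x exp_gt_zero[of 4] by linarith
  have L: "4 \<le> L" unfolding L_def using x x0 by (simp add: ln_ge_iff)
  have "exp 1 \<le> (exp 4 :: real)" by simp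
  then have "exp 1 \<le> x" using x by linarith
  then have s: "-1 \<le> s" "s \<le> 0" unfolding s_def using x0 y False by (simp_all add: field_simps)
  have "(\<Sum>k<4. lnln_deriv k x / fact k * (y - x) ^ k)
      = ln L + s / L - (L + 1) / (2 * L^2) * s^2 + (2 * L^2 + 3 * L + 2) / (6 * L^3) * s^3"
  proof -
    have d: "y - x = s * x" using x0 by (simp add: s_def)
    have "0 < ln x" using L unfolding L_def by simp
    then show ?thesis unfolding d L_def using x0
      by (simp add: eval_nat_numeral power_mult_distrib) (simp add: field_simps)
  qed
  moreover have "lnln_potential y = 0" using False by (simp add: lnln_potential_def max_def)
  ultimately show ?thesis using lnln_taylor3_nonneg_left[OF L s] by simp
qed

lemma lnln_taylor3_increment_nonpos:
  fixes x m1 m2 m3 \<psi> :: real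
  assumes x: "exp 4 \<le> x" and m2: "0 < m2" and m1: "m1 \<le> m2 / (2 * x) * (1 + \<psi>)"
    and \<psi>: "ln x * \<psi> \<le> 1/2" and m3: "ln x / x * (m3 / m2) \<le> 1/2"
  shows "lnln_deriv 1 x * m1 + lnln_deriv 2 x / 2 * m2 + lnln_deriv 3 x / 6 * m3 \<le> 0"
proof -
  define L where "L = ln x"
  have x0: "0 < x" using x exp_gt_zero[of 4] by linarith
  have L: "4 \<le> L" unfolding L_def using x x0 by (simp add: ln_ge_iff)
  have d1: "lnln_deriv 1 x = 1 / (x * L)"
    and d2: "lnln_deriv 2 x = - (L + 1) / (x^2 * L^2)"
    and d3: "lnln_deriv 3 x = (2 * L^2 + 3 * L + 2) / (x^3 * L^3)"
    by (simp_all add: L_def eval_nat_numeral)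
  define K where "K = m2 / (2 * x^2 * L^2)"
  define r where "r = L / x * (m3 / m2)"
  define q where "q = (2 * L^2 + 3 * L + 2) / (3 * L^2)"
  have K: "0 < K" unfolding K_def using m2 x0 L by simp
  have "lnln_deriv 1 x * m1 \<le> lnln_deriv 1 x * (m2 / (2 * x) * (1 + \<psi>))"
    using m1 x0 L by (intro mult_left_mono) (simp_all add: d1 L_def[symmetric])
  also have "\<dots> = K * (L + L * \<psi>)"
    unfolding K_def d1 using x0 L by (simp add: field_simps eval_nat_numeral)
  finally have 1: "lnln_deriv 1 x * m1 \<le> K * (L + L * \<psi>)" .
  have 2: "lnln_deriv 2 x / 2 * m2 = - K * (L + 1)"
    unfolding K_def d2 using x0 L by (simp add: field_simps eval_nat_numeral)
  have 3: "lnln_deriv 3 x / 6 * m3 = K * (r * q)"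
    unfolding K_def r_def q_def d3 using x0 L m2 by (simp add: field_simps eval_nat_numeral)
  have q: "0 < q" "q \<le> 1"
  proof -
    show "0 < q" unfolding q_def using L by (intro divide_pos_pos add_pos_pos) auto
    have "4 * L \<le> L * L" using L by (intro mult_right_mono) auto
    then have "2 + 3 * L \<le> L * L" using L by linarith
    then show "q \<le> 1" unfolding q_def using L by (simp add: field_simps power2_eq_square)
  qed
  have "r * q \<le> 1/2"
  proof (cases "r \<le> 0")
    case True
    then have "r * q \<le> 0" using q by (intro mult_nonpos_nonneg) auto
    then show ?thesis by linarith
  next
    case False
    then have "r * q \<le> r" using q by (simp add: mult_left_le)
    also have "r \<le> 1/2" using m3 unfolding r_def L_def .
    finally show ?thesis .
  qed
  then have "K * (L * \<psi> - 1 + r * q) \<le> 0"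
    using K \<psi> unfolding L_def by (intro mult_nonneg_nonpos) auto
  then show ?thesis using 1 2 3 by (simp add: algebra_simps)
qed

section \<open>The drift of the potential under a transition kernel\<close>

lemma transition_kernelD:
  assumes "transition_kernel T" and "0 \<le> x"
  shows "prob_space (T x)" and "sets (T x) = sets state_space"
proof -
  have "x \<in> space state_space" using assms(2) by (simp add: space_restrict_space)
  then have "T x \<in> space (prob_algebra state_space)"
    using assms(1) unfolding transition_kernel_def by (rule measurable_space[rotated])
  then show "prob_space (T x)" and "sets (T x) = sets state_space"
    by (auto simp: space_prob_algebra)
qed

lemma measurable_transition_kernel_borel:
  assumes "transition_kernel T" and "0 \<le> x" and "f \<in> borel_measurable borel"
  shows "f \<in> borel_measurable (T x)"
  using measurable_restrict_space1[OF assms(3)] transition_kernelD(2)[OF assms(1,2)]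
  by (simp cong: measurable_cong_sets)

lemma integrable_power_increment:
  assumes kernel: "transition_kernel T" and "0 \<le> x"
    and int3: "integrable (T x) (\<lambda>y. \<bar>y - x\<bar> ^ 3)" and "k \<le> 3"
  shows "integrable (T x) (\<lambda>y. (y - x) ^ k)"
proof -
  interpret prob_space "T x" using transition_kernelD[OF kernel \<open>0 \<le> x\<close>] by simp
  have "integrable (T x) (\<lambda>y. 1 + \<bar>y - x\<bar> ^ 3)" using int3 by simp
  then show ?thesis
  proof (rule Bochner_Integration.integrable_bound)
    show "(\<lambda>y. (y - x) ^ k) \<in> borel_measurable (T x)"
      using kernel \<open>0 \<le> x\<close> by (rule measurable_transition_kernel_borel) measurable
    have "\<bar>y - x\<bar> ^ k \<le> 1 + \<bar>y - x\<bar> ^ 3" for y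
    proof (cases "\<bar>y - x\<bar> \<le> 1")
      case True
      then have "\<bar>y - x\<bar> ^ k \<le> 1" by (intro power_le_one) auto
      then show ?thesis by (simp add: add_increasing2)
    next
      case False
      then have "\<bar>y - x\<bar> ^ k \<le> \<bar>y - x\<bar> ^ 3" using \<open>k \<le> 3\<close> by (intro power_increasing) auto
      then show ?thesis by simp
    qed
    then show "AE y in T x. norm ((y - x) ^ k) \<le> norm (1 + \<bar>y - x\<bar> ^ 3)"
      by (simp add: power_abs)
  qed
qed

lemma integrable_lnln_potential:
  assumes kernel: "transition_kernel T" and "0 \<le> x"
    and int3: "integrable (T x) (\<lambda>y. \<bar>y - x\<bar> ^ 3)"
  shows "integrable (T x) lnln_potential"
proof -
  interpret prob_space "T x" using transition_kernelD[OF kernel \<open>0 \<le> x\<close>] by simp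
  have "integrable (T x) (\<lambda>y. \<bar>(y - x) ^ 1\<bar> + (x + exp 1))"
    using integrable_power_increment[OF assms, of 1] by simp
  then show ?thesis
  proof (rule Bochner_Integration.integrable_bound)
    show "lnln_potential \<in> borel_measurable (T x)"
      using kernel \<open>0 \<le> x\<close> borel_measurable_mono[OF mono_lnln_potential]
      by (rule measurable_transition_kernel_borel)
    have "lnln_potential y \<le> \<bar>y - x\<bar> + (x + exp 1)" for y
      using lnln_potential_le[of y] \<open>0 \<le> x\<close> by arith
    then show "AE y in T x. norm (lnln_potential y) \<le> norm (\<bar>(y - x) ^ 1\<bar> + (x + exp 1))"
      using lnln_potential_nonneg \<open>0 \<le> x\<close> by (intro AE_I2) simp
  qed
qed

lemma lnln_potential_drift:
  assumes kernel: "transition_kernel T" and int3: "integrable (T x) (\<lambda>y. \<bar>y - x\<bar> ^ 3)"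
    and x: "exp 4 \<le> x" and m2: "0 < moment T 2 x"
    and m1: "moment T 1 x \<le> moment T 2 x / (2 * x) * (1 + \<psi>)"
    and \<psi>: "ln x * \<psi> \<le> 1/2" and m3: "ln x / x * (moment T 3 x / moment T 2 x) \<le> 1/2"
  shows "(\<integral>\<^sup>+y. ennreal (lnln_potential y) \<partial>T x) \<le> ennreal (lnln_potential x)"
proof -
  have "exp 1 \<le> (exp 4 :: real)" by simp
  then have x1: "exp 1 \<le> x" using x by linarith
  then have x0: "0 \<le> x" using exp_gt_zero[of 1] by linarith
  interpret prob_space "T x" using transition_kernelD[OF kernel x0] by simp
  have space: "space (T x) = {0..}"
    using sets_eq_imp_space_eq[OF transition_kernelD(2)[OF kernel x0]]
    by (simp add: space_restrict_space)
  let ?P = "\<lambda>y. \<Sum>k<4. lnln_deriv k x / fact k * (y - x) ^ k"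
  have int_pow: "integrable (T x) (\<lambda>y. (y - x) ^ k)" if "k < 4" for k
    using integrable_power_increment[OF kernel x0 int3] that by simp
  have int_V: "integrable (T x) lnln_potential"
    by (rule integrable_lnln_potential[OF kernel x0 int3])
  have "(\<integral>y. lnln_potential y \<partial>T x) \<le> (\<integral>y. ?P y \<partial>T x)"
    using int_V int_pow x by (intro integral_mono lnln_potential_le_taylor3) (auto simp: space)
  also have "\<dots> = (\<Sum>k<4. lnln_deriv k x / fact k * moment T k x)"
    using int_pow by (simp add: moment_def)
  also have "\<dots> = ln (ln x) + (lnln_deriv 1 x * moment T 1 x + lnln_deriv 2 x / 2 * moment T 2 x
                                + lnln_deriv 3 x / 6 * moment T 3 x)"
    by (simp add: eval_nat_numeral moment_def prob_space)
  also have "\<dots> \<le> ln (ln x)"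
    using lnln_taylor3_increment_nonpos[OF x m2 m1 \<psi> m3] by simp
  also have "\<dots> = lnln_potential x" using x1 by (simp add: lnln_potential_def max_def)
  finally show ?thesis
    using int_V lnln_potential_nonneg by (simp add: nn_integral_eq_integral ennreal_leI)
qed

lemma eventually_lnln_potential_drift:
  assumes kernel: "transition_kernel T"
    and third_moment: "\<And>x. 0 \<le> x \<Longrightarrow> integrable (T x) (\<lambda>y. \<bar>y - x\<bar> ^ 3)"
    and mu2_pos: "\<forall>\<^sub>F x in at_top. 0 < moment T 2 x"
    and \<psi>: "\<forall>\<^sub>F x in at_top. moment T 1 x \<le> moment T 2 x / (2 * x) * (1 + \<psi> x)"
    and \<psi>_lim: "((\<lambda>x. ln x * \<psi> x) \<longlongrightarrow> 0) at_top"
    and mu3: "((\<lambda>x. ln x / x * (moment T 3 x / moment T 2 x)) \<longlongrightarrow> 0) at_top"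
  shows "\<forall>\<^sub>F x in at_top. (\<integral>\<^sup>+y. ennreal (lnln_potential y) \<partial>T x) \<le> ennreal (lnln_potential x)"
proof -
  have "\<forall>\<^sub>F x in at_top. ln x * \<psi> x < 1/2"
    and "\<forall>\<^sub>F x in at_top. ln x / x * (moment T 3 x / moment T 2 x) < 1/2"
    by (rule order_tendstoD(2)[OF \<psi>_lim], simp) (rule order_tendstoD(2)[OF mu3], simp)
  with eventually_ge_at_top[of "exp 4"] mu2_pos \<psi> show ?thesis
  proof eventually_elim
    case (elim x)
    then have "0 \<le> x" using exp_gt_zero[of 4] by linarith
    with elim show ?case by (intro lnln_potential_drift[OF kernel third_moment]) auto
  qed
qed

section \<open>Markov chains driven by a transition kernel\<close>

lemma sigma_algebra_nat_filtration: "sigma_algebra (space M) (nat_filtration M X n)"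
  unfolding nat_filtration_def by (rule sigma_algebra_sigma_sets) auto

lemma vimage_in_nat_filtration:
  "i \<le> n \<Longrightarrow> D \<in> sets state_space \<Longrightarrow> X i -` D \<inter> space M \<in> nat_filtration M X n"
  unfolding nat_filtration_def by (rule sigma_sets.Basic) blast

lemma nat_filtration_mono: "n \<le> n' \<Longrightarrow> nat_filtration M X n \<subseteq> nat_filtration M X n'"
  unfolding nat_filtration_def using le_trans by (intro sigma_sets_subseteq) blast

locale kernel_markov_chain =
  fixes M :: "'a measure" and X :: "nat \<Rightarrow> 'a \<Rightarrow> real" and T :: "real \<Rightarrow> real measure"
  assumes markov_chain: "markov_chain M X T" and kernel: "transition_kernel T"
begin

sublocale prob_space M
  using markov_chain by (simp add: markov_chain_def)

lemma measurable_X [measurable]: "X n \<in> M \<rightarrow>\<^sub>M state_space"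
  using markov_chain by (simp add: markov_chain_def)

lemma borel_measurable_X [measurable]: "X n \<in> borel_measurable M"
  using measurable_X by (simp add: measurable_restrict_space2_iff)

lemma X_nonneg: "\<omega> \<in> space M \<Longrightarrow> 0 \<le> X n \<omega>"
  using measurable_space[OF measurable_X] by (force simp: space_restrict_space)

lemma nat_filtration_subset_events: "nat_filtration M X n \<subseteq> events"
  unfolding nat_filtration_def
  by (rule sets.sigma_sets_subset) (auto intro: measurable_sets[OF measurable_X])

lemma measurable_kernel_X [measurable]: "(\<lambda>\<omega>. T (X n \<omega>)) \<in> M \<rightarrow>\<^sub>M prob_algebra state_space"
  using kernel unfolding transition_kernel_def by (rule measurable_compose[OF measurable_X])

lemma prob_space_kernel_X: "\<omega> \<in> space M \<Longrightarrow> prob_space (T (X n \<omega>))"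
  using transition_kernelD(1)[OF kernel X_nonneg] .

lemma emeasure_kernel_X: "\<omega> \<in> space M \<Longrightarrow> emeasure (T (X n \<omega>)) B = ennreal (measure (T (X n \<omega>)) B)"
  using prob_space.finite_measure[OF prob_space_kernel_X]
  by (rule finite_measure.emeasure_eq_measure)

lemma emeasure_step:
  assumes A: "A \<in> nat_filtration M X n" and B: "B \<in> sets state_space"
  shows "emeasure M (A \<inter> (X (Suc n) -` B \<inter> space M))
           = (\<integral>\<^sup>+\<omega>. indicator A \<omega> * emeasure (T (X n \<omega>)) B \<partial>M)"
proof -
  have A_events: "A \<in> events" using A nat_filtration_subset_events by auto
  have bounded: "norm (indicator A \<omega> * measure (T (X n \<omega>)) B) \<le> (1::real)" if "\<omega> \<in> space M" for \<omega>
    using prob_space.prob_le_1[OF prob_space_kernel_X[OF that]] by (auto simp: indicator_def)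
  have int: "integrable M (\<lambda>\<omega>. indicator A \<omega> * measure (T (X n \<omega>)) B)"
    using A_events B bounded by (intro integrable_const_bound[where B = 1] AE_I2) auto
  have "emeasure M (A \<inter> (X (Suc n) -` B \<inter> space M))
      = ennreal (measure M (A \<inter> (X (Suc n) -` B \<inter> space M)))"
    by (simp add: emeasure_eq_measure)
  also have "\<dots> = ennreal (\<integral>\<omega>. indicator A \<omega> * measure (T (X n \<omega>)) B \<partial>M)"
    using markov_chain A B by (simp add: markov_chain_def)
  also have "\<dots> = (\<integral>\<^sup>+\<omega>. ennreal (indicator A \<omega> * measure (T (X n \<omega>)) B) \<partial>M)"
    using int by (intro nn_integral_eq_integral[symmetric]) auto
  also have "\<dots> = (\<integral>\<^sup>+\<omega>. indicator A \<omega> * emeasure (T (X n \<omega>)) B \<partial>M)"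
    by (intro nn_integral_cong) (simp add: emeasure_kernel_X indicator_def)
  finally show ?thesis .
qed

lemma kernel_X_measurable_density:
  "(\<lambda>\<omega>. T (X n \<omega>)) \<in> density M f \<rightarrow>\<^sub>M subprob_algebra state_space"
  using measurable_prob_algebraD[OF measurable_kernel_X] by (simp cong: measurable_cong_sets)

lemma distr_density_step:
  assumes A: "A \<in> nat_filtration M X n"
  shows "distr (density M (indicator A)) state_space (X (Suc n))
           = density M (indicator A) \<bind> (\<lambda>\<omega>. T (X n \<omega>))"
    (is "distr ?N _ _ = _")
proof (rule measure_eqI)
  have A_events: "A \<in> events" using A nat_filtration_subset_events by auto
  have N_nonempty: "space ?N \<noteq> {}" using not_empty by simp
  show "sets (distr ?N state_space (X (Suc n))) = sets (?N \<bind> (\<lambda>\<omega>. T (X n \<omega>)))"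
    using sets_bind[OF _ N_nonempty, of _ state_space] transition_kernelD(2)[OF kernel X_nonneg]
    by simp
  fix B assume "B \<in> sets (distr ?N state_space (X (Suc n)))"
  then have B: "B \<in> sets state_space" by simp
  have preimage: "X (Suc n) -` B \<inter> space M \<in> events" using B by measurable
  have "emeasure (distr ?N state_space (X (Suc n))) B
      = (\<integral>\<^sup>+\<omega>. indicator (A \<inter> (X (Suc n) -` B \<inter> space M)) \<omega> \<partial>M)"
    using A_events B preimage
    by (simp add: emeasure_distr emeasure_density indicator_inter_arith[symmetric] ac_simps
             cong: measurable_cong_sets)
  also have "\<dots> = emeasure M (A \<inter> (X (Suc n) -` B \<inter> space M))"
    using A_events preimage by simp
  also have "\<dots> = (\<integral>\<^sup>+\<omega>. indicator A \<omega> * emeasure (T (X n \<omega>)) B \<partial>M)"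
    by (rule emeasure_step[OF A B])
  also have "\<dots> = (\<integral>\<^sup>+\<omega>. emeasure (T (X n \<omega>)) B \<partial>?N)"
    using A_events B
    by (subst nn_integral_density)
       (auto intro: measurable_compose[OF measurable_prob_algebraD[OF measurable_kernel_X]
                                          measurable_emeasure_subprob_algebra])
  also have "\<dots> = emeasure (?N \<bind> (\<lambda>\<omega>. T (X n \<omega>))) B"
    by (rule emeasure_bind[symmetric, OF N_nonempty kernel_X_measurable_density B])
  finally show "emeasure (distr ?N state_space (X (Suc n))) B = emeasure (?N \<bind> (\<lambda>\<omega>. T (X n \<omega>))) B" .
qed

lemma nn_integral_step:
  assumes A: "A \<in> nat_filtration M X n" and g: "g \<in> borel_measurable state_space"
  shows "(\<integral>\<^sup>+\<omega>. indicator A \<omega> * g (X (Suc n) \<omega>) \<partial>M)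
           = (\<integral>\<^sup>+\<omega>. indicator A \<omega> * (\<integral>\<^sup>+y. g y \<partial>T (X n \<omega>)) \<partial>M)"
proof -
  let ?N = "density M (indicator A)"
  have A_events: "A \<in> events" using A nat_filtration_subset_events by auto
  have "(\<integral>\<^sup>+\<omega>. indicator A \<omega> * g (X (Suc n) \<omega>) \<partial>M) = (\<integral>\<^sup>+y. g y \<partial>distr ?N state_space (X (Suc n)))"
    using A_events g by (simp add: nn_integral_density nn_integral_distr cong: measurable_cong_sets)
  also have "\<dots> = (\<integral>\<^sup>+\<omega>. (\<integral>\<^sup>+y. g y \<partial>T (X n \<omega>)) \<partial>?N)"
    unfolding distr_density_step[OF A] by (rule nn_integral_bind[OF g kernel_X_measurable_density])
  also have "\<dots> = (\<integral>\<^sup>+\<omega>. indicator A \<omega> * (\<integral>\<^sup>+y. g y \<partial>T (X n \<omega>)) \<partial>M)"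
    using A_events g
    by (subst nn_integral_density)
       (auto intro: measurable_compose[OF measurable_prob_algebraD[OF measurable_kernel_X]
                                          nn_integral_measurable_subprob_algebra])
  finally show ?thesis .
qed

text \<open>The chain stays in \<open>S\<close> at the times \<open>1, \<dots>, n\<close>; the starting point is not constrained.\<close>

definition stays_in :: "real set \<Rightarrow> nat \<Rightarrow> 'a set" where
  "stays_in S n = {\<omega> \<in> space M. \<forall>j\<in>{1..n}. X j \<omega> \<in> S}"

lemma stays_in_0 [simp]: "stays_in S 0 = space M"
  by (simp add: stays_in_def)

lemma stays_in_Suc: "stays_in S (Suc n) = stays_in S n \<inter> (X (Suc n) -` S \<inter> space M)"
  by (auto simp: stays_in_def atLeastAtMostSuc_conv)

lemma stays_inD: "\<omega> \<in> stays_in S n \<Longrightarrow> 1 \<le> j \<Longrightarrow> j \<le> n \<Longrightarrow> X j \<omega> \<in> S"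
  by (simp add: stays_in_def)

lemma stays_in_in_nat_filtration:
  assumes "S \<in> sets state_space"
  shows "stays_in S n \<in> nat_filtration M X n"
proof (induction n)
  case 0
  show ?case unfolding nat_filtration_def by (simp add: sigma_sets_top)
next
  case (Suc n)
  interpret sigma_algebra "space M" "nat_filtration M X (Suc n)"
    by (rule sigma_algebra_nat_filtration)
  have "stays_in S n \<in> nat_filtration M X (Suc n)"
    using Suc nat_filtration_mono[of n "Suc n"] by auto
  moreover have "X (Suc n) -` S \<inter> space M \<in> nat_filtration M X (Suc n)"
    using assms by (intro vimage_in_nat_filtration) auto
  ultimately show ?case unfolding stays_in_Suc by (rule Int)
qed

lemma stays_in_events: "S \<in> sets state_space \<Longrightarrow> stays_in S n \<in> events"
  using stays_in_in_nat_filtration nat_filtration_subset_events by blast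

lemma emeasure_stays_in_le_power:
  assumes S: "S \<in> sets state_space" and \<delta>: "\<And>x. x \<in> S \<Longrightarrow> measure (T x) S \<le> \<delta>"
  shows "emeasure M (stays_in S (Suc n)) \<le> ennreal \<delta> ^ n"
proof (induction n)
  case 0
  show ?case by (simp add: emeasure_le_1)
next
  case (Suc n)
  have "emeasure M (stays_in S (Suc (Suc n)))
      = (\<integral>\<^sup>+\<omega>. indicator (stays_in S (Suc n)) \<omega> * emeasure (T (X (Suc n) \<omega>)) S \<partial>M)"
    unfolding stays_in_Suc[of S "Suc n"] using S by (intro emeasure_step stays_in_in_nat_filtration)
  also have "\<dots> \<le> (\<integral>\<^sup>+\<omega>. ennreal \<delta> * indicator (stays_in S (Suc n)) \<omega> \<partial>M)"
  proof (intro nn_integral_mono)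
    fix \<omega> assume \<omega>: "\<omega> \<in> space M"
    show "indicator (stays_in S (Suc n)) \<omega> * emeasure (T (X (Suc n) \<omega>)) S
          \<le> ennreal \<delta> * indicator (stays_in S (Suc n)) \<omega>"
    proof (cases "\<omega> \<in> stays_in S (Suc n)")
      case True
      then have "X (Suc n) \<omega> \<in> S" by (simp add: stays_in_def)
      then show ?thesis using True \<delta> \<omega> by (simp add: emeasure_kernel_X ennreal_leI)
    qed simp
  qed
  also have "\<dots> = ennreal \<delta> * emeasure M (stays_in S (Suc n))"
    using S by (simp add: nn_integral_cmult_indicator stays_in_events)
  also have "\<dots> \<le> ennreal \<delta> * ennreal \<delta> ^ n"
    using Suc by (rule mult_left_mono) simp
  finally show ?case by simp
qed

lemma emeasure_stays_in_forever:
  assumes S: "S \<in> sets state_space" and \<delta>: "\<delta> < 1" "\<And>x. x \<in> S \<Longrightarrow> measure (T x) S \<le> \<delta>"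
  shows "emeasure M (\<Inter>n. stays_in S n) = 0"
proof -
  define \<delta>' where "\<delta>' = max 0 \<delta>"
  have \<delta>': "0 \<le> \<delta>'" "\<delta>' < 1" "\<And>x. x \<in> S \<Longrightarrow> measure (T x) S \<le> \<delta>'"
    using \<delta> by (force simp: \<delta>'_def)+
  have "(\<lambda>n. ennreal (\<delta>' ^ n)) \<longlonglongrightarrow> ennreal 0"
    using \<delta>' by (intro tendsto_ennrealI LIMSEQ_realpow_zero)
  moreover have "emeasure M (\<Inter>n. stays_in S n) \<le> ennreal (\<delta>' ^ n)" for n
  proof -
    have "emeasure M (\<Inter>n. stays_in S n) \<le> emeasure M (stays_in S (Suc n))"
      using S by (intro emeasure_mono stays_in_events) auto
    also have "\<dots> \<le> ennreal (\<delta>' ^ n)"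
      using emeasure_stays_in_le_power[OF S \<delta>'(3)] \<delta>' by (simp add: ennreal_power)
    finally show ?thesis .
  qed
  ultimately have "emeasure M (\<Inter>n. stays_in S n) \<le> 0"
    by (intro LIMSEQ_le_const) auto
  then show ?thesis by simp
qed

definition exits_above :: "real \<Rightarrow> real \<Rightarrow> nat \<Rightarrow> 'a set" where
  "exits_above m K n = stays_in {m..K} n \<inter> {\<omega> \<in> space M. K < X (Suc n) \<omega>}"

lemma exits_above_events: "0 \<le> m \<Longrightarrow> exits_above m K n \<in> events"
  unfolding exits_above_def
  by (intro sets.Int stays_in_events) (auto simp: sets_restrict_space_iff)

lemma disjoint_family_exits_above: "disjoint_family (exits_above m K)"
proof -
  have "exits_above m K i \<inter> exits_above m K j = {}" if "i < j" for i j
    using that stays_inD[of _ "{m..K}" j "Suc i"] by (fastforce simp: exits_above_def)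
  then show ?thesis
    unfolding disjoint_family_on_def by (metis Int_commute linorder_neqE_nat)
qed

lemma never_below_subset:
  "{\<omega> \<in> space M. \<forall>n\<ge>1. m \<le> X n \<omega>} \<subseteq> (\<Inter>n. stays_in {m..K} n) \<union> (\<Union>n. exits_above m K n)"
proof
  fix \<omega> assume \<omega>: "\<omega> \<in> {\<omega> \<in> space M. \<forall>n\<ge>1. m \<le> X n \<omega>}"
  show "\<omega> \<in> (\<Inter>n. stays_in {m..K} n) \<union> (\<Union>n. exits_above m K n)"
  proof (rule ccontr)
    assume "\<omega> \<notin> (\<Inter>n. stays_in {m..K} n) \<union> (\<Union>n. exits_above m K n)"
    then obtain n where "\<omega> \<notin> stays_in {m..K} n" and no_exit: "\<And>n. \<omega> \<notin> exits_above m K n" by auto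
    moreover have "\<omega> \<in> stays_in {m..K} n" for n
    proof (induction n)
      case (Suc n)
      then have "X (Suc n) \<omega> \<le> K" using no_exit[of n] \<omega> by (auto simp: exits_above_def)
      then show ?case using Suc \<omega> by (auto simp: stays_in_Suc)
    qed (use \<omega> in simp)
    ultimately show False by blast
  qed
qed

end

section \<open>A Lyapunov criterion for recurrence\<close>

lemma ennreal_suminf_le_telescoping:
  fixes w b :: "nat \<Rightarrow> ennreal"
  assumes step: "\<And>n. w (Suc n) + b n \<le> w n"
  shows "(\<Sum>n. b n) \<le> w 0"
proof (rule suminf_le_const)
  have "(\<Sum>j<n. b j) + w n \<le> w 0" for n
  proof (induction n)
    case (Suc n)
    have "(\<Sum>j<Suc n. b j) + w (Suc n) = (\<Sum>j<n. b j) + (w (Suc n) + b n)"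
      by (simp add: ac_simps)
    also have "\<dots> \<le> (\<Sum>j<n. b j) + w n" using step by (rule add_left_mono)
    finally show ?case using Suc by order
  qed simp
  then show "(\<Sum>j<n. b j) \<le> w 0" for n by (meson add_increasing2 order_trans zero_le order_refl)
qed simp

context kernel_markov_chain
begin

text \<open>The expected potential of the chain killed on leaving \<open>[m, K]\<close> does not increase, and
  leaving upwards costs at least \<open>V K\<close>.\<close>

lemma lyapunov_step:
  assumes V: "mono V" and m: "0 \<le> m"
    and drift: "\<And>x. m \<le> x \<Longrightarrow> (\<integral>\<^sup>+y. ennreal (V y) \<partial>T x) \<le> ennreal (V x)"
  shows "(\<integral>\<^sup>+\<omega>. indicator (stays_in {m..K} (Suc n)) \<omega> * ennreal (V (X (Suc (Suc n)) \<omega>)) \<partial>M)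
           + ennreal (V K) * emeasure M (exits_above m K n)
         \<le> (\<integral>\<^sup>+\<omega>. indicator (stays_in {m..K} n) \<omega> * ennreal (V (X (Suc n) \<omega>)) \<partial>M)"
proof -
  have S: "{m..K} \<in> sets state_space" using m by (simp add: sets_restrict_space_iff)
  have V_borel: "V \<in> borel_measurable borel" using V by (rule borel_measurable_mono)
  then have V_meas: "(\<lambda>y. ennreal (V y)) \<in> borel_measurable state_space"
    by (intro measurable_restrict_space1) measurable
  have "(\<integral>\<^sup>+\<omega>. indicator (stays_in {m..K} (Suc n)) \<omega> * ennreal (V (X (Suc (Suc n)) \<omega>)) \<partial>M)
      = (\<integral>\<^sup>+\<omega>. indicator (stays_in {m..K} (Suc n)) \<omega> * (\<integral>\<^sup>+y. ennreal (V y) \<partial>T (X (Suc n) \<omega>)) \<partial>M)"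
    by (rule nn_integral_step[OF stays_in_in_nat_filtration[OF S] V_meas])
  also have "\<dots> \<le> (\<integral>\<^sup>+\<omega>. indicator (stays_in {m..K} (Suc n)) \<omega> * ennreal (V (X (Suc n) \<omega>)) \<partial>M)"
    using drift stays_inD[of _ "{m..K}" "Suc n" "Suc n"]
    by (intro nn_integral_mono) (auto simp: indicator_def)
  finally have "(\<integral>\<^sup>+\<omega>. indicator (stays_in {m..K} (Suc n)) \<omega> * ennreal (V (X (Suc (Suc n)) \<omega>)) \<partial>M)
      + ennreal (V K) * emeasure M (exits_above m K n)
    \<le> (\<integral>\<^sup>+\<omega>. indicator (stays_in {m..K} (Suc n)) \<omega> * ennreal (V (X (Suc n) \<omega>)) \<partial>M)
      + (\<integral>\<^sup>+\<omega>. ennreal (V K) * indicator (exits_above m K n) \<omega> \<partial>M)"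
    using exits_above_events[OF m] by (simp add: nn_integral_cmult_indicator add_right_mono)
  also have "\<dots> = (\<integral>\<^sup>+\<omega>. indicator (stays_in {m..K} (Suc n)) \<omega> * ennreal (V (X (Suc n) \<omega>))
                          + ennreal (V K) * indicator (exits_above m K n) \<omega> \<partial>M)"
    using stays_in_events[OF S] exits_above_events[OF m] V_borel
    by (intro nn_integral_add[symmetric]) auto
  also have "\<dots> \<le> (\<integral>\<^sup>+\<omega>. indicator (stays_in {m..K} n) \<omega> * ennreal (V (X (Suc n) \<omega>)) \<partial>M)"
  proof (intro nn_integral_mono)
    fix \<omega>
    have "V K \<le> V (X (Suc n) \<omega>)" if "\<omega> \<in> exits_above m K n"
      using that V by (auto simp: exits_above_def mono_def)
    then show "indicator (stays_in {m..K} (Suc n)) \<omega> * ennreal (V (X (Suc n) \<omega>))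
                 + ennreal (V K) * indicator (exits_above m K n) \<omega>
               \<le> indicator (stays_in {m..K} n) \<omega> * ennreal (V (X (Suc n) \<omega>))"
      by (auto simp: indicator_def stays_in_Suc exits_above_def ennreal_leI)
  qed
  finally show ?thesis .
qed

lemma lyapunov_exit_bound:
  assumes V: "mono V" and m: "0 \<le> m"
    and drift: "\<And>x. m \<le> x \<Longrightarrow> (\<integral>\<^sup>+y. ennreal (V y) \<partial>T x) \<le> ennreal (V x)"
    and start: "AE \<omega> in M. X 0 \<omega> = x0"
  shows "ennreal (V K) * emeasure M (\<Union>n. exits_above m K n) \<le> (\<integral>\<^sup>+y. ennreal (V y) \<partial>T x0)"
proof -
  have S: "{m..K} \<in> sets state_space" using m by (simp add: sets_restrict_space_iff)
  have V_meas: "(\<lambda>y. ennreal (V y)) \<in> borel_measurable state_space"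
    using borel_measurable_mono[OF V] by (intro measurable_restrict_space1) measurable
  have "(\<Sum>n. emeasure M (exits_above m K n)) = emeasure M (\<Union>n. exits_above m K n)"
    using exits_above_events[OF m] disjoint_family_exits_above by (intro suminf_emeasure) auto
  then have "ennreal (V K) * emeasure M (\<Union>n. exits_above m K n)
      = (\<Sum>n. ennreal (V K) * emeasure M (exits_above m K n))"
    by simp
  also have "\<dots> \<le> (\<integral>\<^sup>+\<omega>. indicator (stays_in {m..K} 0) \<omega> * ennreal (V (X (Suc 0) \<omega>)) \<partial>M)"
    using lyapunov_step[OF V m drift] by (rule ennreal_suminf_le_telescoping)
  also have "\<dots> = (\<integral>\<^sup>+\<omega>. indicator (stays_in {m..K} 0) \<omega> * (\<integral>\<^sup>+y. ennreal (V y) \<partial>T (X 0 \<omega>)) \<partial>M)"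
    by (rule nn_integral_step[OF stays_in_in_nat_filtration[OF S] V_meas])
  also have "\<dots> = (\<integral>\<^sup>+\<omega>. (\<integral>\<^sup>+y. ennreal (V y) \<partial>T x0) \<partial>M)"
    using start by (intro nn_integral_cong_AE) auto
  also have "\<dots> = (\<integral>\<^sup>+y. ennreal (V y) \<partial>T x0)"
    by (simp add: emeasure_space_1)
  finally show ?thesis .
qed

lemma prob_hits_below:
  assumes V: "mono V" "\<And>y. 0 \<le> V y" "filterlim V at_top at_top" and m: "0 \<le> m"
    and drift: "\<And>x. m \<le> x \<Longrightarrow> (\<integral>\<^sup>+y. ennreal (V y) \<partial>T x) \<le> ennreal (V x)"
    and escape: "\<And>K. \<exists>\<delta><1. \<forall>x\<in>{m..K}. measure (T x) {m..K} \<le> \<delta>"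
    and start: "AE \<omega> in M. X 0 \<omega> = x0" and finite: "(\<integral>\<^sup>+y. ennreal (V y) \<partial>T x0) < \<infinity>"
  shows "prob {\<omega> \<in> space M. \<exists>n\<ge>1. X n \<omega> \<in> {0..<m}} = 1"
proof -
  define F where "F = {\<omega> \<in> space M. \<forall>n\<ge>1. m \<le> X n \<omega>}"
  define c where "c = enn2real (\<integral>\<^sup>+y. ennreal (V y) \<partial>T x0)"
  have F: "F \<in> events" unfolding F_def by measurable
  have bound: "V K * prob F \<le> c" for K
  proof -
    obtain \<delta> where \<delta>: "\<delta> < 1" "\<And>x. x \<in> {m..K} \<Longrightarrow> measure (T x) {m..K} \<le> \<delta>"
      using escape by blast
    have S: "{m..K} \<in> sets state_space" using m by (simp add: sets_restrict_space_iff)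
    have "emeasure M F \<le> emeasure M ((\<Inter>n. stays_in {m..K} n) \<union> (\<Union>n. exits_above m K n))"
      using never_below_subset stays_in_events[OF S] exits_above_events[OF m]
      by (intro emeasure_mono) (auto simp: F_def)
    also have "\<dots> \<le> emeasure M (\<Inter>n. stays_in {m..K} n) + emeasure M (\<Union>n. exits_above m K n)"
      using stays_in_events[OF S] exits_above_events[OF m] by (intro emeasure_subadditive) auto
    also have "\<dots> = emeasure M (\<Union>n. exits_above m K n)"
      using emeasure_stays_in_forever[OF S \<delta>] by simp
    finally have "ennreal (V K) * emeasure M F \<le> ennreal (V K) * emeasure M (\<Union>n. exits_above m K n)"
      by (rule mult_left_mono) simp
    also have "\<dots> \<le> (\<integral>\<^sup>+y. ennreal (V y) \<partial>T x0)"
      by (rule lyapunov_exit_bound[OF V(1) m drift start])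
    finally have "ennreal (V K * prob F) \<le> ennreal c"
      using finite V(2)[of K] by (simp add: c_def emeasure_eq_measure ennreal_mult)
    then show ?thesis by (simp add: c_def ennreal_le_iff)
  qed
  have "prob F \<le> 0"
  proof (rule tendsto_lowerbound)
    show "((\<lambda>K. c / V K) \<longlongrightarrow> 0) at_top"
      by (intro tendsto_divide_0[OF tendsto_const] filterlim_at_top_imp_at_infinity V(3))
    show "\<forall>\<^sub>F K in at_top. prob F \<le> c / V K"
      using filterlim_at_top_dense[THEN iffD1, OF V(3), rule_format, of 0]
      by eventually_elim (use bound in \<open>simp add: pos_le_divide_eq mult.commute\<close>)
  qed simp
  then have "prob F = 0" by (simp add: measure_le_0_iff)
  moreover have "{\<omega> \<in> space M. \<exists>n\<ge>1. X n \<omega> \<in> {0..<m}} = space M - F"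
    using X_nonneg by (auto simp: F_def)
  ultimately show ?thesis using prob_compl[OF F] by simp
qed

end

lemma recurrent_set_lyapunov:
  assumes kernel: "transition_kernel T"
    and V: "mono V" "\<And>y. 0 \<le> V y" "filterlim V at_top at_top"
    and V_integrable: "\<And>x. 0 \<le> x \<Longrightarrow> integrable (T x) V"
    and drift: "\<And>x. m \<le> x \<Longrightarrow> (\<integral>\<^sup>+y. ennreal (V y) \<partial>T x) \<le> ennreal (V x)"
    and escape: "\<And>K. \<exists>\<delta><1. \<forall>x\<in>{m..K}. measure (T x) {m..K} \<le> \<delta>"
    and m: "0 \<le> m"
  shows "recurrent_set T {0..<m}"
  unfolding recurrent_set_def
proof (intro allI impI)
  fix x0 :: real and M :: "(nat \<Rightarrow> real) measure" and X
  assume x0: "0 \<le> x0" and chain: "markov_chain M X T" and start: "AE \<omega> in M. X 0 \<omega> = x0"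
  interpret kernel_markov_chain M X T using chain kernel by unfold_locales
  have "(\<integral>\<^sup>+y. ennreal (V y) \<partial>T x0) = ennreal (\<integral>y. V y \<partial>T x0)"
    using V_integrable[OF x0] V(2) by (intro nn_integral_eq_integral) auto
  then have "(\<integral>\<^sup>+y. ennreal (V y) \<partial>T x0) < \<infinity>" by simp
  then show "measure M {\<omega> \<in> space M. \<exists>n\<ge>1. X n \<omega> \<in> {0..<m}} = 1"
    using prob_hits_below[OF V m drift escape start] by simp
qed

lemma uniform_escape_from_intervals:
  assumes kernel: "transition_kernel T"
    and escape: "\<forall>n::nat. n \<ge> 1 \<longrightarrow> (\<exists>\<delta><1. \<forall>x\<in>{0..real n}. measure (T x) {0..real n} \<le> \<delta>)"
    and m: "0 \<le> m"
  shows "\<exists>\<delta><1. \<forall>x\<in>{m..K}. measure (T x) {m..K} \<le> \<delta>"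
proof -
  define n where "n = nat \<lceil>max K 1\<rceil>"
  have "1 \<le> n" and K: "K \<le> real n" unfolding n_def by linarith+
  then obtain \<delta> where "\<delta> < 1" and \<delta>: "\<And>x. x \<in> {0..real n} \<Longrightarrow> measure (T x) {0..real n} \<le> \<delta>"
    using escape by blast
  have "measure (T x) {m..K} \<le> \<delta>" if x: "x \<in> {m..K}" for x
  proof -
    have x0: "0 \<le> x" using x m by simp
    interpret prob_space "T x" using transition_kernelD(1)[OF kernel x0] .
    have "{0..real n} \<in> events"
      using transition_kernelD(2)[OF kernel x0] by (simp add: sets_restrict_space_iff)
    then have "measure (T x) {m..K} \<le> measure (T x) {0..real n}"
      using m K by (intro finite_measure_mono) auto
    also have "\<dots> \<le> \<delta>" using x x0 K by (intro \<delta>) simp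
    finally show ?thesis .
  qed
  with \<open>\<delta> < 1\<close> show ?thesis by blast
qed

theorem theorem4p5:
  fixes T :: "real \<Rightarrow> real measure"
  assumes kernel: "transition_kernel T"
    and third_moment: "\<forall>x\<ge>0. integrable (T x) (\<lambda>y. \<bar>y - x\<bar> ^ 3)"
    and mu2_pos: "\<forall>\<^sub>F x in at_top. moment T 2 x > 0"
    and cond_i: "\<exists>\<psi>1 :: real \<Rightarrow> real.
        (\<forall>\<^sub>F x in at_top. moment T 1 x \<le> moment T 2 x / (2 * x) * (1 + \<psi>1 x)) \<and>
        ((\<lambda>x. ln x * \<psi>1 x) \<longlongrightarrow> 0) at_top"
    and cond_ii: "((\<lambda>x. ln x / x * (moment T 3 x / moment T 2 x)) \<longlongrightarrow> 0) at_top"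
    and cond_iii: "\<forall>m::nat. m \<ge> 1 \<longrightarrow> (\<exists>\<delta><1. \<forall>x0\<in>{0..real m}. measure (T x0) {0..real m} \<le> \<delta>)"
  shows "\<exists>m::real. 0 < m \<and> recurrent_set T {0..<m}"
proof -
  obtain \<psi> where \<psi>: "\<forall>\<^sub>F x in at_top. moment T 1 x \<le> moment T 2 x / (2 * x) * (1 + \<psi> x)"
    and \<psi>_lim: "((\<lambda>x. ln x * \<psi> x) \<longlongrightarrow> 0) at_top"
    using cond_i by blast
  obtain m0 where drift: "\<And>x. m0 \<le> x \<Longrightarrow>
      (\<integral>\<^sup>+y. ennreal (lnln_potential y) \<partial>T x) \<le> ennreal (lnln_potential x)"
    using eventually_lnln_potential_drift[OF kernel _ mu2_pos \<psi> \<psi>_lim cond_ii] third_moment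
    unfolding eventually_at_top_linorder by blast
  define m where "m = max m0 1"
  have "recurrent_set T {0..<m}"
  proof (rule recurrent_set_lyapunov[OF kernel mono_lnln_potential lnln_potential_nonneg
                                        lnln_potential_at_top])
    show "integrable (T x) lnln_potential" if "0 \<le> x" for x
      using integrable_lnln_potential[OF kernel that] third_moment that by simp
    show "\<exists>\<delta><1. \<forall>x\<in>{m..K}. measure (T x) {m..K} \<le> \<delta>" for K
      by (rule uniform_escape_from_intervals[OF kernel cond_iii]) (simp add: m_def)
  qed (use drift in \<open>auto simp: m_def\<close>)
  then show ?thesis by (intro exI[of _ m]) (simp add: m_def)
qed

end
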